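(* For any subgroup $\mathcal M\le\mathcal P_n$, $\mathrm{rank}\,A^{(\mathcal M)}=\mathrm{rank}\,D^{(\mathcal M)}=|\mathcal C^{*(\mathcal M)}|$.
   Context: $\mathcal P_n$ is the $n$-qubit Pauli group without phases; $\langle A,B\rangle=0$ if $A,B$ commute and $1$ otherwise. $\Gamma$ is a finite collection of supports $\gamma\subseteq\{1,\dots,n\}$; $\mathcal E_\gamma$ is the set of non-identity Paulis supported in $\gamma$, and $\mathcal E_\Gamma$ the disjoint union of the $\mathcal E_\gamma$ (each $e$ labeled by its support $\gamma_e$). For $h\in\mathcal P_n$, $h_\gamma$ is its restriction to $\gamma$ (identity elsewhere). $A^{(\mathcal M)}$ is the $|\mathcal M|\times|\mathcal E_\Gamma|$ matrix with $A^{(\mathcal M)}[M,e]=1$ if $M_{\gamma_e}=e$ and $0$ otherwise; $D^{(\mathcal M)}$ is the $|\mathcal M|\times|\mathcal E_\Gamma|$ matrix with entries $\langle M,e\rangle$. $\mathcal C^{*(\mathcal M)}$ is the set of nontrivial syndrome classes, i.e. equivalence classes of $\mathcal E_\Gamma$ under equality of $(\langle e,M\rangle)_{M\in\mathcal M}$, excluding the class of all-zero syndrome. *)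

theory Defs
  imports Complex_Main "HOL-Algebra.Group" "HOL-Library.Function_Algebras"
begin

(* single-qubit Paulis without phase *)
datatype pauli = PI | PX | PY | PZ

fun pmul1 :: "pauli \<Rightarrow> pauli \<Rightarrow> pauli" where
  "pmul1 PI b = b"
| "pmul1 a PI = a"
| "pmul1 PX PX = PI" | "pmul1 PY PY = PI" | "pmul1 PZ PZ = PI"
| "pmul1 PX PY = PZ" | "pmul1 PY PX = PZ"
| "pmul1 PX PZ = PY" | "pmul1 PZ PX = PY"
| "pmul1 PY PZ = PX" | "pmul1 PZ PY = PX"

definition anticomm1 :: "pauli \<Rightarrow> pauli \<Rightarrow> bool" where
  "anticomm1 a b \<longleftrightarrow> a \<noteq> PI \<and> b \<noteq> PI \<and> a \<noteq> b"

definition paulis :: "nat \<Rightarrow> (nat \<Rightarrow> pauli) set" where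
  "paulis n = {p. \<forall>i. i \<notin> {1..n} \<longrightarrow> p i = PI}"

definition pid :: "nat \<Rightarrow> pauli" where
  "pid = (\<lambda>i. PI)"

definition pmul :: "(nat \<Rightarrow> pauli) \<Rightarrow> (nat \<Rightarrow> pauli) \<Rightarrow> (nat \<Rightarrow> pauli)" where
  "pmul p q = (\<lambda>i. pmul1 (p i) (q i))"

definition pauli_group :: "nat \<Rightarrow> (nat \<Rightarrow> pauli) monoid" where
  "pauli_group n = \<lparr>carrier = paulis n, mult = pmul, one = pid\<rparr>"

(* symplectic form <A,B>: 0 if A,B commute, 1 otherwise *)
definition symp :: "nat \<Rightarrow> (nat \<Rightarrow> pauli) \<Rightarrow> (nat \<Rightarrow> pauli) \<Rightarrow> nat" where
  "symp n p q = card {i \<in> {1..n}. anticomm1 (p i) (q i)} mod 2"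

definition prestrict :: "(nat \<Rightarrow> pauli) \<Rightarrow> nat set \<Rightarrow> (nat \<Rightarrow> pauli)" where
  "prestrict h \<gamma> = (\<lambda>i. if i \<in> \<gamma> then h i else PI)"

(* E_Gamma: disjoint union of E_gamma, elements labelled by their support gamma *)
definition errs :: "nat \<Rightarrow> nat set set \<Rightarrow> (nat set \<times> (nat \<Rightarrow> pauli)) set" where
  "errs n \<Gamma> = {(\<gamma>, e). \<gamma> \<in> \<Gamma> \<and> e \<in> paulis n \<and> e \<noteq> pid \<and> (\<forall>i. i \<notin> \<gamma> \<longrightarrow> e i = PI)}"

definition matA :: "(nat \<Rightarrow> pauli) \<Rightarrow> nat set \<times> (nat \<Rightarrow> pauli) \<Rightarrow> real" where
  "matA M ge = (if prestrict M (fst ge) = snd ge then 1 else 0)"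

definition matD :: "nat \<Rightarrow> (nat \<Rightarrow> pauli) \<Rightarrow> nat set \<times> (nat \<Rightarrow> pauli) \<Rightarrow> real" where
  "matD n M ge = real (symp n M (snd ge))"

definition syn_rel :: "nat \<Rightarrow> nat set set \<Rightarrow> (nat \<Rightarrow> pauli) set
    \<Rightarrow> ((nat set \<times> (nat \<Rightarrow> pauli)) \<times> (nat set \<times> (nat \<Rightarrow> pauli))) set" where
  "syn_rel n \<Gamma> \<M> = {(x, y). x \<in> errs n \<Gamma> \<and> y \<in> errs n \<Gamma> \<and>
      (\<forall>M\<in>\<M>. symp n (snd x) M = symp n (snd y) M)}"

definition nontriv_classes :: "nat \<Rightarrow> nat set set \<Rightarrow> (nat \<Rightarrow> pauli) set
    \<Rightarrow> (nat set \<times> (nat \<Rightarrow> pauli)) set set" where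
  "nontriv_classes n \<Gamma> \<M> = {c \<in> errs n \<Gamma> // syn_rel n \<Gamma> \<M>.
      \<not> (\<forall>x\<in>c. \<forall>M\<in>\<M>. symp n (snd x) M = 0)}"

definition real_rank :: "'r set \<Rightarrow> 'c set \<Rightarrow> ('r \<Rightarrow> 'c \<Rightarrow> real) \<Rightarrow> nat" where
  "real_rank R C f = vector_space.dim (\<lambda>(a::real) (v::'c \<Rightarrow> real) x. a * v x)
      ((\<lambda>r. \<lambda>c. if c \<in> C then f r c else 0) ` R)"

end

theory Submission
  imports Defs "HOL-Library.Indicator_Function"
begin

text \<open>Write \<open>\<chi>(P, Q) = (-1) ^ \<langle>P, Q\<rangle>\<close> (\<open>comm_sign\<close>). It is multiplicative in each
  argument, so its sum over a finite set of Paulis closed under multiplication is the size of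
  the set if \<open>\<chi>(x, _)\<close> is trivial there and \<open>0\<close> otherwise.

  On the block of columns with support \<open>\<gamma>\<close>, the row of \<open>A\<close> indexed by \<open>M\<close> is the point
  mass at \<open>M\<^sub>\<gamma>\<close> and the row of \<open>D\<close> is \<open>e \<mapsto> \<langle>M\<^sub>\<gamma>, e\<rangle> = (1 - \<chi>(M\<^sub>\<gamma>, e)) / 2\<close>.
  Orthogonality of characters over the Paulis supported in \<open>\<gamma>\<close> makes each of these rows the
  image of the other under a fixed block diagonal linear map, so \<open>A\<close> and \<open>D\<close> have the same
  rank.

  Each row \<open>D\<^sub>M\<close> is the sum of the indicator vectors of the nontrivial syndrome classes on
  which \<open>\<langle>_, M\<rangle> = 1\<close>. Conversely, for \<open>x\<close> of nontrivial syndrome, orthogonality of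
  characters over the subgroup \<open>\<M>\<close> shows that the indicator of the class of \<open>x\<close> is
  \<open>-(2 / |\<M>|) \<Sum>\<^sub>M \<chi>(x, M) D\<^sub>M\<close>. So the row space of \<open>D\<close> is spanned by the indicators
  of the nontrivial classes, which are independent since the classes are disjoint and nonempty.\<close>

section \<open>Phaseless Pauli operators\<close>

lemma finite_paulis: "finite (paulis n)"
proof -
  have "paulis n = {p. \<forall>i. (i \<in> {1..n} \<longrightarrow> p i \<in> UNIV) \<and> (i \<notin> {1..n} \<longrightarrow> p i = PI)}"
    by (auto simp: paulis_def)
  also have "finite \<dots>"
  proof (rule finite_set_of_finite_funs)
    have univ: "(UNIV :: pauli set) = {PI, PX, PY, PZ}"
      using pauli.exhaust by auto
    show "finite (UNIV :: pauli set)"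
      unfolding univ by simp
  qed simp
  finally show ?thesis .
qed

definition paulis_on :: "nat \<Rightarrow> nat set \<Rightarrow> (nat \<Rightarrow> pauli) set" where
  "paulis_on n \<gamma> = {p \<in> paulis n. \<forall>i. i \<notin> \<gamma> \<longrightarrow> p i = PI}"

lemma finite_paulis_on: "finite (paulis_on n \<gamma>)"
  using finite_paulis by (simp add: paulis_on_def)

lemma pid_in_paulis_on: "pid \<in> paulis_on n \<gamma>"
  by (simp add: paulis_on_def paulis_def pid_def)

lemma pmul_in_paulis_on: "p \<in> paulis_on n \<gamma> \<Longrightarrow> q \<in> paulis_on n \<gamma> \<Longrightarrow> pmul p q \<in> paulis_on n \<gamma>"
  by (simp add: paulis_on_def paulis_def pmul_def)

lemma prestrict_in_paulis_on: "p \<in> paulis n \<Longrightarrow> prestrict p \<gamma> \<in> paulis_on n \<gamma>"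
  by (simp add: paulis_on_def paulis_def prestrict_def)

lemma mem_errs_iff: "(\<gamma>, e) \<in> errs n \<Gamma> \<longleftrightarrow> \<gamma> \<in> \<Gamma> \<and> e \<in> paulis_on n \<gamma> \<and> e \<noteq> pid"
  by (auto simp: errs_def paulis_on_def)

lemma finite_errs: "finite \<Gamma> \<Longrightarrow> finite (errs n \<Gamma>)"
  by (rule finite_subset[of _ "\<Gamma> \<times> paulis n"]) (auto simp: errs_def finite_paulis)

lemma pmul_cancel_left: "pmul p (pmul p q) = q"
proof -
  have "pmul1 a (pmul1 a b) = b" for a b by (cases a; cases b) simp_all
  then show ?thesis by (simp add: pmul_def)
qed

lemma pmul_eq_pid_iff: "pmul p q = pid \<longleftrightarrow> p = q"
proof -
  have "pmul1 a b = PI \<longleftrightarrow> a = b" for a b by (cases a; cases b) simp_all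
  then show ?thesis by (simp add: pmul_def pid_def fun_eq_iff)
qed

lemma symp_commute: "symp n p q = symp n q p"
proof -
  have "anticomm1 a b = anticomm1 b a" for a b
    by (auto simp: anticomm1_def)
  then show ?thesis by (simp add: symp_def)
qed

lemma symp_pid: "symp n pid q = 0" "symp n q pid = 0"
  by (simp_all add: symp_def pid_def anticomm1_def)

lemma symp_cases: "symp n p q = 0 \<or> symp n p q = 1"
  unfolding symp_def by auto

lemma symp_prestrict:
  assumes "e \<in> paulis_on n \<gamma>"
  shows "symp n (prestrict p \<gamma>) e = symp n p e"
proof -
  have "anticomm1 (prestrict p \<gamma> i) (e i) = anticomm1 (p i) (e i)" for i
    using assms by (simp add: prestrict_def paulis_on_def anticomm1_def)
  then show ?thesis by (simp add: symp_def)
qed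

section \<open>Commutation signs and orthogonality of characters\<close>

definition comm_sign :: "nat \<Rightarrow> (nat \<Rightarrow> pauli) \<Rightarrow> (nat \<Rightarrow> pauli) \<Rightarrow> real" where
  "comm_sign n p q = (-1) ^ symp n p q"

lemma comm_sign_eq_prod:
  "comm_sign n p q = (\<Prod>i\<in>{1..n}. if anticomm1 (p i) (q i) then -1 else 1)"
proof -
  have "(\<Prod>i\<in>{1..n}. if anticomm1 (p i) (q i) then -1 else 1 :: real)
      = (-1) ^ card {i \<in> {1..n}. anticomm1 (p i) (q i)}"
    by (simp add: prod.If_cases Int_def conj_commute)
  then show ?thesis
    by (simp add: comm_sign_def symp_def minus_one_power_iff)
qed

lemma comm_sign_pmul_left: "comm_sign n (pmul p q) r = comm_sign n p r * comm_sign n q r"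
proof -
  have "(if anticomm1 (pmul1 a b) c then -1 else 1 :: real)
      = (if anticomm1 a c then -1 else 1) * (if anticomm1 b c then -1 else 1)" for a b c
    by (cases a; cases b; cases c) (simp_all add: anticomm1_def)
  then show ?thesis
    by (simp add: comm_sign_eq_prod pmul_def prod.distrib)
qed

lemma comm_sign_commute: "comm_sign n p q = comm_sign n q p"
  by (simp add: comm_sign_def symp_commute)

lemma comm_sign_eq_1_iff: "comm_sign n p q = 1 \<longleftrightarrow> symp n p q = 0"
  using symp_cases[of n p q] by (auto simp: comm_sign_def)

lemma comm_sign_eq_neg1_iff: "comm_sign n p q = -1 \<longleftrightarrow> symp n p q = 1"
  using symp_cases[of n p q] by (auto simp: comm_sign_def)

lemma real_symp_eq: "real (symp n p q) = (1 - comm_sign n p q) / 2"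
  using symp_cases[of n p q] by (auto simp: comm_sign_def)

lemma symp_pmul_eq_0_iff: "symp n (pmul p q) r = 0 \<longleftrightarrow> symp n p r = symp n q r"
proof -
  have "symp n (pmul p q) r = 0 \<longleftrightarrow> comm_sign n p r * comm_sign n q r = 1"
    by (simp add: comm_sign_eq_1_iff[symmetric] comm_sign_pmul_left)
  also have "\<dots> \<longleftrightarrow> symp n p r = symp n q r"
    using symp_cases[of n p r] symp_cases[of n q r] by (auto simp: comm_sign_def)
  finally show ?thesis .
qed

text \<open>Multiplication by an element \<open>M\<^sub>0\<close> with \<open>\<chi>(x, M\<^sub>0) = -1\<close> permutes \<open>H\<close> and flips the
  sign of every term.\<close>

lemma sum_comm_sign_closed:
  assumes fin: "finite H" and closed: "\<forall>a\<in>H. \<forall>b\<in>H. pmul a b \<in> H"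
  shows "(\<Sum>M\<in>H. comm_sign n x M) = (if \<forall>M\<in>H. symp n x M = 0 then card H else 0)"
proof (cases "\<forall>M\<in>H. symp n x M = 0")
  case True
  then show ?thesis by (simp add: comm_sign_def)
next
  case False
  then obtain M0 where "M0 \<in> H" "symp n x M0 \<noteq> 0" by blast
  then have M0: "M0 \<in> H" "comm_sign n M0 x = -1"
    using symp_cases[of n x M0] by (auto simp: comm_sign_eq_neg1_iff symp_commute)
  have "bij_betw (pmul M0) H H"
    by (rule bij_betw_byWitness[where f' = "pmul M0"])
      (use closed M0 in \<open>auto simp: pmul_cancel_left\<close>)
  then have "(\<Sum>M\<in>H. comm_sign n x M) = (\<Sum>M\<in>H. comm_sign n x (pmul M0 M))"
    by (rule sum.reindex_bij_betw[symmetric])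
  also have "\<dots> = - (\<Sum>M\<in>H. comm_sign n x M)"
    by (simp add: comm_sign_commute[of n x] comm_sign_pmul_left M0 sum_negf)
  finally show ?thesis using False by auto
qed

lemma ex_anticommuting_in_paulis_on:
  assumes x: "x \<in> paulis_on n \<gamma>" "x \<noteq> pid"
  shows "\<exists>f\<in>paulis_on n \<gamma>. symp n x f = 1"
proof -
  obtain i where i: "x i \<noteq> PI" using x(2) by (auto simp: pid_def)
  with x(1) have "i \<in> {1..n}" "i \<in> \<gamma>" by (auto simp: paulis_on_def paulis_def)
  define f where "f = (\<lambda>j. if j = i then (if x i = PX then PZ else PX) else PI)"
  have "f \<in> paulis_on n \<gamma>"
    using \<open>i \<in> {1..n}\<close> \<open>i \<in> \<gamma>\<close> by (auto simp: f_def paulis_on_def paulis_def)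
  moreover have "{j \<in> {1..n}. anticomm1 (x j) (f j)} = {i}"
    using \<open>i \<in> {1..n}\<close> i by (auto simp: f_def anticomm1_def)
  then have "symp n x f = 1"
    by (simp add: symp_def)
  ultimately show ?thesis by blast
qed

lemma sum_comm_sign_paulis_on:
  assumes "x \<in> paulis_on n \<gamma>"
  shows "(\<Sum>f\<in>paulis_on n \<gamma>. comm_sign n x f) = (if x = pid then card (paulis_on n \<gamma>) else 0)"
proof -
  have "(\<forall>f\<in>paulis_on n \<gamma>. symp n x f = 0) \<longleftrightarrow> x = pid"
    using ex_anticommuting_in_paulis_on[OF assms] symp_pid by fastforce
  then show ?thesis
    using sum_comm_sign_closed[OF finite_paulis_on] pmul_in_paulis_on by simp
qed

lemma sum_symp_comm_sign_paulis_on: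
  assumes m: "m \<in> paulis_on n \<gamma>" and e: "e \<in> paulis_on n \<gamma>" "e \<noteq> pid"
  shows "(\<Sum>f\<in>paulis_on n \<gamma>. real (symp n m f) * comm_sign n f e)
    = - real (card (paulis_on n \<gamma>)) / 2 * (if m = e then 1 else 0)"
proof -
  have "real (symp n m f) * comm_sign n f e
      = (comm_sign n e f - comm_sign n (pmul m e) f) / 2" for f
    by (simp add: real_symp_eq comm_sign_pmul_left comm_sign_commute[of n f e] algebra_simps)
  then have "(\<Sum>f\<in>paulis_on n \<gamma>. real (symp n m f) * comm_sign n f e)
      = ((\<Sum>f\<in>paulis_on n \<gamma>. comm_sign n e f) - (\<Sum>f\<in>paulis_on n \<gamma>. comm_sign n (pmul m e) f)) / 2"
    by (simp only: sum_subtractf[symmetric] sum_divide_distrib)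
  also have "\<dots> = - real (card (paulis_on n \<gamma>)) / 2 * (if m = e then 1 else 0)"
    using m e by (simp add: sum_comm_sign_paulis_on pmul_in_paulis_on pmul_eq_pid_iff)
  finally show ?thesis .
qed

section \<open>Row spaces of real matrices\<close>

interpretation fun_vs: vector_space "\<lambda>(a::real) (v::'c \<Rightarrow> real) x. a * v x"
  by unfold_locales (simp_all add: fun_eq_iff distrib_left distrib_right)

interpretation fun_vs_pair:
  vector_space_pair "\<lambda>(a::real) (v::'c \<Rightarrow> real) x. a * v x"
    "\<lambda>(a::real) (v::'c \<Rightarrow> real) x. a * v x" ..

lemma (in vector_space_pair) dim_image_le_finite:
  assumes f: "Vector_Spaces.linear s1 s2 f" and S: "finite S"
  shows "vs2.dim (f ` S) \<le> vs1.dim S"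
proof -
  obtain B where B: "B \<subseteq> S" "vs1.independent B" "S \<subseteq> vs1.span B" "card B = vs1.dim S"
    by (rule vs1.basis_exists)
  have "finite B" using B(1) S by (rule finite_subset)
  have "f ` S \<subseteq> vs2.span (f ` B)"
    using B(3) linear_span_image[OF f] by auto
  then have "vs2.dim (f ` S) \<le> card (f ` B)"
    using vs2.dim_le_card \<open>finite B\<close> by blast
  also have "\<dots> \<le> card B"
    using \<open>finite B\<close> by (rule card_image_le)
  finally show ?thesis using B(4) by simp
qed

lemma sum_fun_apply: "(\<Sum>i\<in>A. f i) x = (\<Sum>i\<in>A. f i x :: 'b::comm_monoid_add)"
  by (induction A rule: infinite_finite_induct) auto

definition matrix_row :: "'c set \<Rightarrow> ('r \<Rightarrow> 'c \<Rightarrow> real) \<Rightarrow> 'r \<Rightarrow> 'c \<Rightarrow> real" where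
  "matrix_row C f r = (\<lambda>c. if c \<in> C then f r c else 0)"

lemma real_rank_eq_dim_rows: "real_rank R C f = fun_vs.dim (matrix_row C f ` R)"
  by (simp add: real_rank_def matrix_row_def)

abbreviation fun_linear :: "(('c \<Rightarrow> real) \<Rightarrow> 'd \<Rightarrow> real) \<Rightarrow> bool" where
  "fun_linear T \<equiv> Vector_Spaces.linear (\<lambda>a v x. a * v x) (\<lambda>a v x. a * v x) T"

lemma real_rank_eq_by_linear_maps:
  assumes "finite R" and "fun_linear T" "fun_linear T'"
    and "\<And>r. r \<in> R \<Longrightarrow> T (matrix_row C f r) = matrix_row C g r"
    and "\<And>r. r \<in> R \<Longrightarrow> T' (matrix_row C g r) = matrix_row C f r"
  shows "real_rank R C f = real_rank R C g"
proof -
  have "T ` matrix_row C f ` R = matrix_row C g ` R" "T' ` matrix_row C g ` R = matrix_row C f ` R"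
    using assms(4,5) by (force simp: image_image)+
  then show ?thesis
    using fun_vs_pair.dim_image_le_finite[OF assms(2), of "matrix_row C f ` R"]
      fun_vs_pair.dim_image_le_finite[OF assms(3), of "matrix_row C g ` R"] \<open>finite R\<close>
    by (simp add: real_rank_eq_dim_rows)
qed

lemma dim_indicators_disjoint:
  assumes disj: "pairwise disjnt C" and nonempty: "{} \<notin> C"
  shows "fun_vs.dim ((\<lambda>X. indicator X :: 'a \<Rightarrow> real) ` C) = card C"
proof -
  let ?ind = "(\<lambda>X. indicator X :: 'a \<Rightarrow> real) ` C"
  have inj: "inj_on (\<lambda>X. indicator X :: 'a \<Rightarrow> real) C"
    by (rule inj_onI) (metis indicator_eq_1_iff subsetI subset_antisym)
  have "fun_vs.independent ?ind"
    unfolding fun_vs.independent_explicit_module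
  proof (intro allI impI)
    fix t :: "('a \<Rightarrow> real) set" and u v
    assume t: "finite t" "t \<subseteq> ?ind" and v: "v \<in> t"
      and sum_0: "(\<Sum>w\<in>t. (\<lambda>x. u w * w x)) = 0"
    obtain X0 where X0: "X0 \<in> C" "v = indicator X0" using t(2) v by auto
    have "X0 \<noteq> {}" using X0(1) nonempty by auto
    then obtain x0 where "x0 \<in> X0" by blast
    have "u w * w x0 = (if w = v then u v else 0)" if "w \<in> t" for w
    proof -
      obtain Y where Y: "Y \<in> C" "w = indicator Y" using t(2) \<open>w \<in> t\<close> by auto
      have "x0 \<in> Y \<longleftrightarrow> Y = X0"
        using disj Y(1) X0(1) \<open>x0 \<in> X0\<close> by (auto simp: pairwise_def disjnt_def)
      then show ?thesis using Y X0 \<open>x0 \<in> X0\<close> by auto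
    qed
    then have "u v = (\<Sum>w\<in>t. u w * w x0)"
      using t(1) v by (simp add: sum.delta)
    also have "\<dots> = (\<Sum>w\<in>t. (\<lambda>x. u w * w x)) x0"
      by (simp add: sum_fun_apply)
    finally show "u v = 0"
      by (simp add: sum_0)
  qed
  then have "fun_vs.dim ?ind = card ?ind"
    by (rule fun_vs.dim_eq_card_independent)
  with card_image[OF inj] show ?thesis by simp
qed

section \<open>Block transforms between the rows of \<open>A\<close> and \<open>D\<close>\<close>

definition block_transform ::
    "nat \<Rightarrow> (nat set \<times> (nat \<Rightarrow> pauli)) set
      \<Rightarrow> (nat set \<Rightarrow> (nat \<Rightarrow> pauli) \<Rightarrow> (nat \<Rightarrow> pauli) \<Rightarrow> real)
      \<Rightarrow> (nat set \<times> (nat \<Rightarrow> pauli) \<Rightarrow> real) \<Rightarrow> nat set \<times> (nat \<Rightarrow> pauli) \<Rightarrow> real" where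
  "block_transform n E K v =
    (\<lambda>(\<gamma>, e). if (\<gamma>, e) \<in> E then \<Sum>h\<in>paulis_on n \<gamma>. v (\<gamma>, h) * K \<gamma> h e else 0)"

lemma linear_block_transform: "fun_linear (block_transform n E K)"
  unfolding Vector_Spaces.linear_iff
  by (auto simp: fun_vs.vector_space_axioms block_transform_def fun_eq_iff sum.distrib
      distrib_right sum_distrib_left mult.assoc)

lemma block_transform_matA_row:
  assumes M: "M \<in> paulis n"
  shows "block_transform n (errs n \<Gamma>) (\<lambda>_ h e. real (symp n h e))
      (matrix_row (errs n \<Gamma>) matA M)
    = matrix_row (errs n \<Gamma>) (matD n) M"
proof (rule ext, clarify)
  fix \<gamma> e
  show "block_transform n (errs n \<Gamma>) (\<lambda>_ h e. real (symp n h e))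
      (matrix_row (errs n \<Gamma>) matA M) (\<gamma>, e) = matrix_row (errs n \<Gamma>) (matD n) M (\<gamma>, e)"
  proof (cases "(\<gamma>, e) \<in> errs n \<Gamma>")
    case True
    then have "\<gamma> \<in> \<Gamma>" "e \<in> paulis_on n \<gamma>" by (simp_all add: mem_errs_iff)
    define m where "m = prestrict M \<gamma>"
    have m: "m \<in> paulis_on n \<gamma>"
      using M by (simp add: m_def prestrict_in_paulis_on)
    have "matrix_row (errs n \<Gamma>) matA M (\<gamma>, h) * real (symp n h e)
        = (if h = m then real (symp n m e) else 0)" if "h \<in> paulis_on n \<gamma>" for h
      using that \<open>\<gamma> \<in> \<Gamma>\<close>
      by (auto simp: matrix_row_def matA_def mem_errs_iff m_def symp_pid)
    then have "(\<Sum>h\<in>paulis_on n \<gamma>. matrix_row (errs n \<Gamma>) matA M (\<gamma>, h) * real (symp n h e))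
        = real (symp n m e)"
      using m by (simp add: finite_paulis_on)
    also have "\<dots> = real (symp n M e)"
      using \<open>e \<in> paulis_on n \<gamma>\<close> by (simp add: m_def symp_prestrict)
    finally show ?thesis
      using True by (simp add: block_transform_def matrix_row_def matD_def)
  qed (simp add: block_transform_def matrix_row_def)
qed

lemma block_transform_matD_row:
  assumes M: "M \<in> paulis n"
  shows "block_transform n (errs n \<Gamma>) (\<lambda>\<gamma> f e. - 2 / real (card (paulis_on n \<gamma>)) * comm_sign n f e)
      (matrix_row (errs n \<Gamma>) (matD n) M)
    = matrix_row (errs n \<Gamma>) matA M"
proof (rule ext, clarify)
  fix \<gamma> e
  let ?N = "real (card (paulis_on n \<gamma>))"
  show "block_transform n (errs n \<Gamma>) (\<lambda>\<gamma> f e. - 2 / real (card (paulis_on n \<gamma>)) * comm_sign n f e)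
      (matrix_row (errs n \<Gamma>) (matD n) M) (\<gamma>, e) = matrix_row (errs n \<Gamma>) matA M (\<gamma>, e)"
  proof (cases "(\<gamma>, e) \<in> errs n \<Gamma>")
    case True
    then have "\<gamma> \<in> \<Gamma>" "e \<in> paulis_on n \<gamma>" "e \<noteq> pid" by (simp_all add: mem_errs_iff)
    define m where "m = prestrict M \<gamma>"
    have m: "m \<in> paulis_on n \<gamma>"
      using M by (simp add: m_def prestrict_in_paulis_on)
    have "?N > 0"
      using pid_in_paulis_on[of n \<gamma>] by (auto simp: card_gt_0_iff finite_paulis_on)
    have row: "matrix_row (errs n \<Gamma>) (matD n) M (\<gamma>, f) = real (symp n m f)"
      if f: "f \<in> paulis_on n \<gamma>" for f
    proof (cases "f = pid")
      case False
      with f \<open>\<gamma> \<in> \<Gamma>\<close> have "(\<gamma>, f) \<in> errs n \<Gamma>"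
        by (simp add: mem_errs_iff)
      with f show ?thesis
        by (simp add: matrix_row_def matD_def m_def symp_prestrict)
    qed (simp add: matrix_row_def mem_errs_iff symp_pid)
    have "(\<Sum>f\<in>paulis_on n \<gamma>. matrix_row (errs n \<Gamma>) (matD n) M (\<gamma>, f) * (- 2 / ?N * comm_sign n f e))
        = (\<Sum>f\<in>paulis_on n \<gamma>. - 2 / ?N * (real (symp n m f) * comm_sign n f e))"
      by (rule sum.cong) (simp_all add: row)
    also have "\<dots> = - 2 / ?N * (\<Sum>f\<in>paulis_on n \<gamma>. real (symp n m f) * comm_sign n f e)"
      by (rule sum_distrib_left[symmetric])
    also have "\<dots> = (if m = e then 1 else 0)"
      using m \<open>e \<in> paulis_on n \<gamma>\<close> \<open>e \<noteq> pid\<close> \<open>?N > 0\<close> by (simp add: sum_symp_comm_sign_paulis_on)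
    finally show ?thesis
      using True by (simp add: block_transform_def matrix_row_def matA_def m_def)
  qed (simp add: block_transform_def matrix_row_def)
qed

lemma real_rank_matA_eq_matD:
  assumes "\<M> \<subseteq> paulis n"
  shows "real_rank \<M> (errs n \<Gamma>) matA = real_rank \<M> (errs n \<Gamma>) (matD n)"
proof (rule real_rank_eq_by_linear_maps)
  show "finite \<M>"
    using assms finite_paulis by (rule finite_subset)
  show "block_transform n (errs n \<Gamma>) (\<lambda>_ h e. real (symp n h e)) (matrix_row (errs n \<Gamma>) matA M)
      = matrix_row (errs n \<Gamma>) (matD n) M" if "M \<in> \<M>" for M
    by (rule block_transform_matA_row) (use that assms in auto)
  show "block_transform n (errs n \<Gamma>) (\<lambda>\<gamma> f e. - 2 / real (card (paulis_on n \<gamma>)) * comm_sign n f e)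
      (matrix_row (errs n \<Gamma>) (matD n) M) = matrix_row (errs n \<Gamma>) matA M" if "M \<in> \<M>" for M
    by (rule block_transform_matD_row) (use that assms in auto)
qed (rule linear_block_transform)+


section \<open>Syndrome classes and the row space of \<open>D\<close>\<close>

lemma subgroup_pauli_groupD:
  assumes "subgroup \<M> (pauli_group n)"
  shows "\<M> \<subseteq> paulis n" "\<forall>a\<in>\<M>. \<forall>b\<in>\<M>. pmul a b \<in> \<M>" "pid \<in> \<M>"
  using subgroup.subset[OF assms] subgroup.m_closed[OF assms] subgroup.one_closed[OF assms]
  by (auto simp: pauli_group_def)

lemma sum_comm_sign_pmul_subgroup:
  assumes "subgroup \<M> (pauli_group n)"
  shows "(\<Sum>M\<in>\<M>. comm_sign n (pmul x z) M)
    = (if \<forall>M\<in>\<M>. symp n x M = symp n z M then card \<M> else 0)"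
proof -
  have "finite \<M>"
    using subgroup_pauli_groupD(1)[OF assms] finite_paulis by (rule finite_subset)
  then show ?thesis
    using sum_comm_sign_closed[of \<M> n "pmul x z"] subgroup_pauli_groupD(2)[OF assms]
    by (simp add: symp_pmul_eq_0_iff)
qed

lemma in_quotient_iff_eq_equiv_class:
  assumes r: "equiv A r" and X: "X \<in> A // r" and z: "z \<in> A"
  shows "z \<in> X \<longleftrightarrow> X = r `` {z}"
proof -
  obtain x where x: "X = r `` {x}" "x \<in> A"
    using X by (rule quotientE)
  have "z \<in> r `` {x} \<longleftrightarrow> r `` {x} = r `` {z}"
    using eq_equiv_class_iff[OF r x(2) z] by simp
  then show ?thesis
    using x(1) by simp
qed

lemma equiv_syn_rel: "equiv (errs n \<Gamma>) (syn_rel n \<Gamma> \<M>)"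
  by (rule equivI) (auto simp: syn_rel_def refl_on_def sym_def trans_def)

lemma syn_rel_Image:
  "x \<in> errs n \<Gamma> \<Longrightarrow>
    syn_rel n \<Gamma> \<M> `` {x} = {y \<in> errs n \<Gamma>. \<forall>M\<in>\<M>. symp n (snd x) M = symp n (snd y) M}"
  by (auto simp: syn_rel_def)

lemma mem_nontriv_classes_iff:
  "X \<in> nontriv_classes n \<Gamma> \<M> \<longleftrightarrow>
    (\<exists>x\<in>errs n \<Gamma>. X = syn_rel n \<Gamma> \<M> `` {x} \<and> (\<exists>M\<in>\<M>. symp n (snd x) M \<noteq> 0))"
proof
  assume X: "X \<in> nontriv_classes n \<Gamma> \<M>"
  then obtain y M where y: "y \<in> X" "M \<in> \<M>" "symp n (snd y) M \<noteq> 0"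
    by (auto simp: nontriv_classes_def)
  have "X \<in> errs n \<Gamma> // syn_rel n \<Gamma> \<M>"
    using X by (simp add: nontriv_classes_def)
  moreover from this have "y \<in> errs n \<Gamma>"
    using y(1) equiv_syn_rel by (metis Union_quotient UnionI)
  ultimately have "X = syn_rel n \<Gamma> \<M> `` {y}"
    using y(1) in_quotient_iff_eq_equiv_class[OF equiv_syn_rel] by metis
  then show "\<exists>x\<in>errs n \<Gamma>. X = syn_rel n \<Gamma> \<M> `` {x} \<and> (\<exists>M\<in>\<M>. symp n (snd x) M \<noteq> 0)"
    using y \<open>y \<in> errs n \<Gamma>\<close> by blast
next
  assume "\<exists>x\<in>errs n \<Gamma>. X = syn_rel n \<Gamma> \<M> `` {x} \<and> (\<exists>M\<in>\<M>. symp n (snd x) M \<noteq> 0)"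
  then obtain x M where x: "x \<in> errs n \<Gamma>" "X = syn_rel n \<Gamma> \<M> `` {x}" "M \<in> \<M>" "symp n (snd x) M \<noteq> 0"
    by blast
  moreover have "x \<in> X"
    using x(1) unfolding x(2) by (rule equiv_class_self[OF equiv_syn_rel])
  moreover have "X \<in> errs n \<Gamma> // syn_rel n \<Gamma> \<M>"
    unfolding x(2) using x(1) by (rule quotientI)
  ultimately show "X \<in> nontriv_classes n \<Gamma> \<M>"
    unfolding nontriv_classes_def by auto
qed

lemma nontriv_classes_subset_quotient:
  "nontriv_classes n \<Gamma> \<M> \<subseteq> errs n \<Gamma> // syn_rel n \<Gamma> \<M>"
  by (auto simp: nontriv_classes_def)

lemma nontriv_class_subset_errs: "X \<in> nontriv_classes n \<Gamma> \<M> \<Longrightarrow> X \<subseteq> errs n \<Gamma>"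
  by (auto simp: mem_nontriv_classes_iff syn_rel_def)

lemma finite_nontriv_classes: "finite \<Gamma> \<Longrightarrow> finite (nontriv_classes n \<Gamma> \<M>)"
  using finite_quotient[OF finite_errs equiv_type[OF equiv_syn_rel]] nontriv_classes_subset_quotient
  by (rule finite_subset[rotated])

lemma matD_row_eq_sum_indicators:
  assumes "finite \<Gamma>" and M: "M \<in> \<M>"
  shows "matrix_row (errs n \<Gamma>) (matD n) M
    = (\<Sum>X\<in>{X \<in> nontriv_classes n \<Gamma> \<M>. \<forall>y\<in>X. symp n (snd y) M = 1}. indicator X)"
    (is "_ = (\<Sum>X\<in>?S. _)")
proof
  fix z
  show "matrix_row (errs n \<Gamma>) (matD n) M z = (\<Sum>X\<in>?S. indicator X) z"
  proof (cases "z \<in> errs n \<Gamma>")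
    case True
    let ?Z = "syn_rel n \<Gamma> \<M> `` {z}"
    have "indicator X z = (if X = ?Z then 1 else 0)" if "X \<in> ?S" for X
    proof -
      have "X \<in> errs n \<Gamma> // syn_rel n \<Gamma> \<M>"
        using that nontriv_classes_subset_quotient by blast
      then have "z \<in> X \<longleftrightarrow> X = ?Z"
        using True by (rule in_quotient_iff_eq_equiv_class[OF equiv_syn_rel])
      then show ?thesis by (simp add: indicator_def)
    qed
    then have "(\<Sum>X\<in>?S. indicator X) z = (\<Sum>X\<in>?S. if X = ?Z then 1 else 0)"
      unfolding sum_fun_apply by (rule sum.cong[OF refl])
    also have "\<dots> = (if ?Z \<in> ?S then 1 else 0)"
      using finite_nontriv_classes[OF \<open>finite \<Gamma>\<close>] by (simp add: sum.delta)
    finally have "(\<Sum>X\<in>?S. indicator X) z = (if ?Z \<in> ?S then 1 else 0)" .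
    moreover have "?Z \<in> ?S \<longleftrightarrow> symp n (snd z) M = 1"
    proof
      assume "?Z \<in> ?S"
      moreover have "z \<in> ?Z"
        using True by (rule equiv_class_self[OF equiv_syn_rel])
      ultimately show "symp n (snd z) M = 1" by blast
    next
      assume z_M: "symp n (snd z) M = 1"
      have "?Z \<in> nontriv_classes n \<Gamma> \<M>"
        unfolding mem_nontriv_classes_iff
        by (rule bexI[of _ z]) (use True M z_M in \<open>auto intro!: bexI[of _ M]\<close>)
      moreover have "\<forall>y\<in>?Z. symp n (snd y) M = 1"
        using True M z_M by (auto simp: syn_rel_Image)
      ultimately show "?Z \<in> ?S" by blast
    qed
    ultimately show ?thesis
      using True symp_cases[of n M "snd z"]
      by (auto simp: matrix_row_def matD_def symp_commute[of n M])
  next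
    case False
    then have "indicator X z = (0 :: real)" if "X \<in> ?S" for X
      using that nontriv_class_subset_errs by (force simp: indicator_def)
    with False show ?thesis
      by (simp add: matrix_row_def sum_fun_apply)
  qed
qed

lemma nontriv_class_memberD:
  assumes X: "X \<in> nontriv_classes n \<Gamma> \<M>" and x: "x \<in> X"
  shows "x \<in> errs n \<Gamma>" "X = syn_rel n \<Gamma> \<M> `` {x}" "\<exists>M\<in>\<M>. symp n (snd x) M \<noteq> 0"
proof -
  show xE: "x \<in> errs n \<Gamma>"
    using X x nontriv_class_subset_errs by blast
  show "X = syn_rel n \<Gamma> \<M> `` {x}"
    using X nontriv_classes_subset_quotient x in_quotient_iff_eq_equiv_class[OF equiv_syn_rel _ xE]
    by blast
  obtain x' M where x': "x' \<in> errs n \<Gamma>" "X = syn_rel n \<Gamma> \<M> `` {x'}"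
    and M: "M \<in> \<M>" "symp n (snd x') M \<noteq> 0"
    using X by (auto simp: mem_nontriv_classes_iff)
  show "\<exists>M\<in>\<M>. symp n (snd x) M \<noteq> 0"
    using x M unfolding x'(2) syn_rel_Image[OF x'(1)] by auto
qed

lemma pairwise_disjnt_nontriv_classes: "pairwise disjnt (nontriv_classes n \<Gamma> \<M>)"
  using quotient_disj[OF equiv_syn_rel] nontriv_classes_subset_quotient
  by (fastforce simp: pairwise_def disjnt_def)

lemma empty_notin_nontriv_classes: "{} \<notin> nontriv_classes n \<Gamma> \<M>"
  using in_quotient_imp_non_empty[OF equiv_syn_rel] nontriv_classes_subset_quotient by blast

lemma indicator_nontriv_class_eq_sum_rows:
  assumes \<M>: "subgroup \<M> (pauli_group n)"
    and X: "X \<in> nontriv_classes n \<Gamma> \<M>" and x: "x \<in> X"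
  shows "indicator X = (\<Sum>M\<in>\<M>. (\<lambda>z. - 2 / real (card \<M>) * comm_sign n (snd x) M
    * matrix_row (errs n \<Gamma>) (matD n) M z))"
proof
  fix z
  let ?K = "real (card \<M>)"
  have fin: "finite \<M>"
    using subgroup_pauli_groupD(1)[OF \<M>] finite_paulis by (rule finite_subset)
  then have "?K > 0"
    using subgroup_pauli_groupD(3)[OF \<M>] card_gt_0_iff by fastforce
  note x_class = nontriv_class_memberD[OF X x]
  have sum_x: "(\<Sum>M\<in>\<M>. comm_sign n (snd x) M) = 0"
    using sum_comm_sign_closed[OF fin subgroup_pauli_groupD(2)[OF \<M>]] x_class(3) by auto
  show "indicator X z = (\<Sum>M\<in>\<M>. (\<lambda>z. - 2 / ?K * comm_sign n (snd x) M
      * matrix_row (errs n \<Gamma>) (matD n) M z)) z"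
  proof (cases "z \<in> errs n \<Gamma>")
    case True
    have summand: "- 2 / ?K * comm_sign n (snd x) M * matrix_row (errs n \<Gamma>) (matD n) M z
        = - 1 / ?K * (comm_sign n (snd x) M - comm_sign n (pmul (snd x) (snd z)) M)" for M
      using True \<open>?K > 0\<close>
      by (simp add: matrix_row_def matD_def real_symp_eq comm_sign_commute[of n M]
          comm_sign_pmul_left field_simps)
    have "(\<Sum>M\<in>\<M>. (\<lambda>z. - 2 / ?K * comm_sign n (snd x) M
        * matrix_row (errs n \<Gamma>) (matD n) M z)) z
      = - 1 / ?K * ((\<Sum>M\<in>\<M>. comm_sign n (snd x) M)
          - (\<Sum>M\<in>\<M>. comm_sign n (pmul (snd x) (snd z)) M))"
      by (simp only: sum_fun_apply summand sum_subtractf[symmetric] sum_distrib_left)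
    also have "\<dots> = (if \<forall>M\<in>\<M>. symp n (snd x) M = symp n (snd z) M then 1 else 0)"
      using \<open>?K > 0\<close> by (simp add: sum_x sum_comm_sign_pmul_subgroup[OF \<M>])
    also have "\<dots> = indicator X z"
      using True x_class(1) by (simp add: x_class(2) syn_rel_Image indicator_def)
    finally show ?thesis ..
  next
    case False
    then show ?thesis
      using X nontriv_class_subset_errs by (force simp: matrix_row_def sum_fun_apply indicator_def)
  qed
qed

lemma span_matD_rows_eq_span_indicators:
  assumes "finite \<Gamma>" and \<M>: "subgroup \<M> (pauli_group n)"
  shows "fun_vs.span (matrix_row (errs n \<Gamma>) (matD n) ` \<M>)
    = fun_vs.span ((\<lambda>X. indicator X) ` nontriv_classes n \<Gamma> \<M>)"
    (is "fun_vs.span ?rows = fun_vs.span ?ind")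
proof -
  have "?rows \<subseteq> fun_vs.span ?ind"
  proof
    fix r assume "r \<in> ?rows"
    then obtain M where M: "M \<in> \<M>" and r: "r = matrix_row (errs n \<Gamma>) (matD n) M" by blast
    have "(\<Sum>X\<in>{X \<in> nontriv_classes n \<Gamma> \<M>. \<forall>y\<in>X. symp n (snd y) M = 1}. indicator X)
        \<in> fun_vs.span ?ind"
      by (rule fun_vs.span_sum, rule fun_vs.span_base) auto
    then show "r \<in> fun_vs.span ?ind"
      using matD_row_eq_sum_indicators[OF \<open>finite \<Gamma>\<close> M] by (simp add: r)
  qed
  moreover have "?ind \<subseteq> fun_vs.span ?rows"
  proof
    fix v assume "v \<in> ?ind"
    then obtain X where X: "X \<in> nontriv_classes n \<Gamma> \<M>" "v = indicator X" by blast
    then obtain x where "x \<in> X"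
      using empty_notin_nontriv_classes[of n \<Gamma> \<M>] by (metis equals0I)
    have "(\<lambda>z. c * matrix_row (errs n \<Gamma>) (matD n) M z) \<in> fun_vs.span ?rows" if "M \<in> \<M>" for c M
      using fun_vs.span_scale[OF fun_vs.span_base, of _ ?rows c] that by simp
    then show "v \<in> fun_vs.span ?rows"
      unfolding X(2) indicator_nontriv_class_eq_sum_rows[OF \<M> X(1) \<open>x \<in> X\<close>]
      by (intro fun_vs.span_sum)
  qed
  ultimately show ?thesis
    by (simp add: fun_vs.span_eq)
qed

lemma real_rank_matD_eq_card_nontriv_classes:
  assumes "finite \<Gamma>" and "subgroup \<M> (pauli_group n)"
  shows "real_rank \<M> (errs n \<Gamma>) (matD n) = card (nontriv_classes n \<Gamma> \<M>)"
proof -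
  have "real_rank \<M> (errs n \<Gamma>) (matD n) = fun_vs.dim ((\<lambda>X. indicator X) ` nontriv_classes n \<Gamma> \<M>)"
    unfolding real_rank_eq_dim_rows
    by (rule fun_vs.span_eq_dim[OF span_matD_rows_eq_span_indicators[OF assms]])
  also have "\<dots> = card (nontriv_classes n \<Gamma> \<M>)"
    using pairwise_disjnt_nontriv_classes empty_notin_nontriv_classes
    by (rule dim_indicators_disjoint)
  finally show ?thesis .
qed

theorem corollary1:
  fixes n :: nat and \<Gamma> :: "nat set set" and \<M> :: "(nat \<Rightarrow> pauli) set"
  assumes "finite \<Gamma>"
    and "\<forall>\<gamma>\<in>\<Gamma>. \<gamma> \<subseteq> {1..n}"
    and "subgroup \<M> (pauli_group n)"
  shows "real_rank \<M> (errs n \<Gamma>) matA = card (nontriv_classes n \<Gamma> \<M>)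
    \<and> real_rank \<M> (errs n \<Gamma>) (matD n) = card (nontriv_classes n \<Gamma> \<M>)"
proof -
  have "real_rank \<M> (errs n \<Gamma>) (matD n) = card (nontriv_classes n \<Gamma> \<M>)"
    using assms(1,3) by (rule real_rank_matD_eq_card_nontriv_classes)
  moreover have "real_rank \<M> (errs n \<Gamma>) matA = real_rank \<M> (errs n \<Gamma>) (matD n)"
    using subgroup_pauli_groupD(1)[OF assms(3)] by (rule real_rank_matA_eq_matD)
  ultimately show ?thesis by simp
qed

end
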